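(* Let $\mathcal W$ be a set of treatments, $(Y_t(w))_{w\in\mathcal W}$ i.i.d. over $t$, $W_t$ drawn with conditional law $P_{t-1}$ given $H^{t-1}=\{(Y_s,W_s):s<t\}$ that is a known function of $H^{t-1}$ (and does not depend on current or future potential outcomes), $Y_t=Y_t(W_t)$, $m(w)=\mathbb E[Y_t(w)]$; assume $\mathrm{Var}(Y_t(w))$ bounded above and away from zero and $\mathbb E|Y_t(w)|^{2+\delta}$ bounded, uniformly in $w$. Let $\psi$ be a linear functional continuous on each $L_2(P_{t-1})$ with Riesz representers $\gamma_t$ ($\mathbb E_{t-1}[\gamma_t f]=\psi(f)$ for $f\in L_2(P_{t-1})$) satisfying $\mathbb E_{t-1}[\gamma_t^2]>b>0$. Suppose that for some $\delta>0$, $\alpha\in[0,\delta/(2+\delta))$ and constants $C,C'>0$, $$\frac{\mathbb E_{t-1}[|\gamma_t|^{2+\delta}]}{\mathbb E_{t-1}[\gamma_t^2]^{2+\delta}}\le C\quad\text{and}\quad\mathbb E_{t-1}[\gamma_t^2]\le C't^\alpha\quad\text{for all }t.$$ For each horizon $T$ let $\lambda_t$, $t=1,\dots,T$, be $H^{t-1}$-measurable allocation rates with $\lambda_t<1$ for $t<T$, $\lambda_T=1$, and for some $C''>0$ $$\frac1{1+T-t}\le\lambda_t\le C''\frac{\mathbb E_{t-1}[\gamma_t^2]^{-1}}{t^{-\alpha}+T^{1-\alpha}-t^{1-\alpha}}.$$ Define $h_t\ge0$ by the recursion $h_t^2\,\mathbb E_{t-1}[\gamma_t^2]=\big(1-\sum_{s=1}^{t-1}h_s^2\,\mathbb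 E_{s-1}[\gamma_s^2]\big)\lambda_t$. Then, as $T\to\infty$: (A1) $\big(\sum_{t=1}^T h_t\big)^2/\mathbb E\big[\sum_{t=1}^T h_t^2\gamma_t^2\big]\to\infty$ in probability; (A2) for some $p>1$, $\sum_{t=1}^T h_t^2\mathbb E_{t-1}[\gamma_t^2]/\mathbb E\big[\sum_{t=1}^T h_t^2\gamma_t^2\big]\to1$ in $L_p$; (A3) $\sum_{t=1}^T h_t^{2+\delta}\mathbb E_{t-1}[|\gamma_t|^{2+\delta}]/\mathbb E\big[\sum_{t=1}^T h_t^2\gamma_t^2\big]^{1+\delta/2}\to0$ in probability.
   Context: $\mathbb E_{t-1}$ is conditional expectation given $H^{t-1}$; $\gamma_t$ inside expectations means $\gamma_t(W_t)$, with $\gamma_t=\gamma(\cdot;H^{t-1})$. $L_2(P_{t-1})$ is the space of functions $f$ with $\mathbb E_{t-1}[f(W_t)^2]<\infty$; continuity of $\psi$ means $|\psi(f)|\le c_{t-1}(\mathbb E_{t-1}[f(W_t)^2])^{1/2}$ for some $c_{t-1}$. *)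

theory Defs
  imports "HOL-Probability.Probability"
begin

definition hist :: "'a measure \<Rightarrow> 'w measure \<Rightarrow> (nat \<Rightarrow> 'w \<Rightarrow> 'a \<Rightarrow> real)
    \<Rightarrow> (nat \<Rightarrow> 'a \<Rightarrow> 'w) \<Rightarrow> nat \<Rightarrow> 'a measure" where
  "hist M Wsp Y W t = sigma (space M)
     {(\<lambda>\<omega>. (Y s (W s \<omega>) \<omega>, W s \<omega>)) -` A \<inter> space M | s A.
        s \<in> {1..t} \<and> A \<in> sets (borel \<Otimes>\<^sub>M Wsp)}"

definition hist_fut :: "'a measure \<Rightarrow> 'w measure \<Rightarrow> (nat \<Rightarrow> 'w \<Rightarrow> 'a \<Rightarrow> real)
    \<Rightarrow> (nat \<Rightarrow> 'a \<Rightarrow> 'w) \<Rightarrow> nat \<Rightarrow> 'a measure" where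
  "hist_fut M Wsp Y W t = sigma (space M)
     (sets (hist M Wsp Y W (t - 1)) \<union>
      {Y s w -` B \<inter> space M | s w B. t \<le> s \<and> w \<in> space Wsp \<and> B \<in> sets borel})"

definition L2k :: "'w measure \<Rightarrow> ('w \<Rightarrow> real) set" where
  "L2k P = {f. f \<in> borel_measurable P \<and> integrable P (\<lambda>w. (f w)\<^sup>2)}"

definition conv_prob_infty :: "'a measure \<Rightarrow> (nat \<Rightarrow> 'a \<Rightarrow> real) \<Rightarrow> bool" where
  "conv_prob_infty M X \<longleftrightarrow> (\<forall>T. X T \<in> borel_measurable M) \<and>
     (\<forall>K::real. (\<lambda>T. measure M {\<omega>\<in>space M. X T \<omega> \<le> K}) \<longlonglongrightarrow> 0)"

definition conv_prob :: "'a measure \<Rightarrow> (nat \<Rightarrow> 'a \<Rightarrow> real) \<Rightarrow> real \<Rightarrow> bool" where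
  "conv_prob M X c \<longleftrightarrow> (\<forall>T. X T \<in> borel_measurable M) \<and>
     (\<forall>\<epsilon>>0. (\<lambda>T. measure M {\<omega>\<in>space M. \<bar>X T \<omega> - c\<bar> > \<epsilon>}) \<longlonglongrightarrow> 0)"

definition conv_Lp :: "'a measure \<Rightarrow> real \<Rightarrow> (nat \<Rightarrow> 'a \<Rightarrow> real) \<Rightarrow> real \<Rightarrow> bool" where
  "conv_Lp M p X c \<longleftrightarrow> (\<forall>T. X T \<in> borel_measurable M) \<and>
     ((\<lambda>T. \<integral>\<^sup>+\<omega>. ennreal (\<bar>X T \<omega> - c\<bar> powr p) \<partial>M) \<longlonglongrightarrow> 0)"

end

theory Submission
  imports Defs
begin

(*
  Write q_t = h_t^2 E_{t-1}[gamma_t^2] for the share of a unit budget spent in round t. The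
  recursion defining h_t spends the fraction lambda_t of what is left, so after round t the
  remainder is the product of the factors 1 - lambda_s; the lower bound lambda_s >= 1/(1+T-s) keeps
  it below (T-t)/T, and lambda_T = 1 spends everything: sum_t q_t = 1 surely. As h_t and gamma_t
  are H^{t-1}-measurable and P_{t-1} is the conditional law of W_t given H^{t-1},
  E[h_t^2 gamma_t(W_t)^2] = E[q_t], so the normaliser E[sum_t h_t^2 gamma_t^2] equals 1 and (A2)
  holds exactly for every T.

  The upper bound on lambda_t, together with T^(1-alpha) - t^(1-alpha) >= (1-alpha) T^(-alpha) (T-t)
  (Young's inequality), gives q_t E_{t-1}[gamma_t^2] <= B_T = C''/(1-alpha) T^(alpha-1). Hence
  q_t <= h_t sqrt B_T, and summing over t yields (sum_t h_t)^2 >= 1/B_T, which tends to infinity.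
  With the moment ratio bound, the Lyapunov sum is at most C C' T^alpha B_T^(delta/2), of order
  T^(alpha - (1-alpha) delta/2), which tends to 0 because alpha < delta/(2+delta).

  So all three limits hold surely, not merely in probability.
*)

section \<open>Deterministic estimates\<close>

lemma powr_one_minus_diff_ge:
  fixes s t \<alpha> :: real
  assumes "0 < s" "s \<le> t" "0 \<le> \<alpha>" "\<alpha> < 1"
  shows "(1 - \<alpha>) * t powr (- \<alpha>) * (t - s) \<le> t powr (1 - \<alpha>) - s powr (1 - \<alpha>)"
proof -
  have t: "0 < t" using assms by linarith
  have young: "s powr (1 - \<alpha>) * t powr \<alpha> \<le> (1 - \<alpha>) * s + \<alpha> * t"
    using Youngs_inequality_0[of "1 - \<alpha>" \<alpha> s t] assms t by simp
  have "s powr (1 - \<alpha>) = s powr (1 - \<alpha>) * t powr \<alpha> * t powr (- \<alpha>)"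
    using t by (simp add: powr_minus)
  also have "\<dots> \<le> ((1 - \<alpha>) * s + \<alpha> * t) * t powr (- \<alpha>)"
    using young by (intro mult_right_mono) auto
  finally have "s powr (1 - \<alpha>) \<le> ((1 - \<alpha>) * s + \<alpha> * t) * t powr (- \<alpha>)" .
  moreover have "t powr (1 - \<alpha>) = t * t powr (- \<alpha>)"
    using t by (simp add: powr_diff powr_minus field_simps)
  ultimately show ?thesis by (simp add: algebra_simps)
qed

lemma allocation_denominator_ge:
  fixes \<alpha> :: real and t T :: nat
  assumes "1 \<le> t" "t \<le> T" "0 \<le> \<alpha>" "\<alpha> < 1"
  shows "(1 - \<alpha>) * real T powr (- \<alpha>) * (1 + real T - real t)
           \<le> real t powr (- \<alpha>) + real T powr (1 - \<alpha>) - real t powr (1 - \<alpha>)"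
proof -
  have "real T powr (- \<alpha>) \<le> real t powr (- \<alpha>)"
    using assms by (intro powr_mono2') auto
  moreover have "0 \<le> \<alpha> * real T powr (- \<alpha>)"
    using assms by simp
  moreover have "(1 - \<alpha>) * real T powr (- \<alpha>) * (real T - real t)
                   \<le> real T powr (1 - \<alpha>) - real t powr (1 - \<alpha>)"
    using assms by (intro powr_one_minus_diff_ge) auto
  ultimately show ?thesis by (simp add: algebra_simps)
qed

lemma allocation_remainder_bounds:
  fixes lam q :: "nat \<Rightarrow> real" and T t :: nat
  assumes lam: "\<And>t. t \<in> {1..T} \<Longrightarrow> 1 / (1 + real T - real t) \<le> lam t \<and> lam t \<le> 1"
    and q: "\<And>t. t \<in> {1..T} \<Longrightarrow> q t = (1 - (\<Sum>s\<in>{1..<t}. q s)) * lam t"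
    and "1 \<le> T" "t \<le> T"
  shows "0 \<le> 1 - (\<Sum>s=1..t. q s) \<and> 1 - (\<Sum>s=1..t. q s) \<le> (real T - real t) / real T"
  using \<open>t \<le> T\<close>
proof (induction t)
  case 0
  then show ?case using \<open>1 \<le> T\<close> by simp
next
  case (Suc t)
  define R where "R = 1 - (\<Sum>s=1..t. q s)"
  have t: "Suc t \<in> {1..T}" and Tt: "1 \<le> real T - real t"
    using Suc.prems by auto
  have R: "0 \<le> R" "R \<le> (real T - real t) / real T"
    using Suc unfolding R_def by auto
  have step: "1 - (\<Sum>s=1..Suc t. q s) = R * (1 - lam (Suc t))"
    using q[OF t] by (simp add: R_def atLeastLessThanSuc_atLeastAtMost algebra_simps)
  have "1 - lam (Suc t) \<le> 1 - 1 / (real T - real t)"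
    using lam[OF t] by simp
  also have "\<dots> = (real T - real (Suc t)) / (real T - real t)"
    using Tt by (simp add: field_simps)
  finally have "R * (1 - lam (Suc t))
                  \<le> (real T - real t) / real T * ((real T - real (Suc t)) / (real T - real t))"
    using R lam[OF t] by (intro mult_mono) auto
  also have "\<dots> = (real T - real (Suc t)) / real T"
    using Tt by (simp add: field_simps)
  finally show ?case using step R lam[OF t] by simp
qed

lemma allocation_share_mult_le:
  fixes lam q :: "nat \<Rightarrow> real" and T t :: nat and v \<alpha> C'' :: real
  assumes lam: "\<And>t. t \<in> {1..T} \<Longrightarrow> 1 / (1 + real T - real t) \<le> lam t \<and> lam t \<le> 1"
    and q: "\<And>t. t \<in> {1..T} \<Longrightarrow> q t = (1 - (\<Sum>s\<in>{1..<t}. q s)) * lam t"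
    and t: "t \<in> {1..T}" and "0 \<le> \<alpha>" "\<alpha> < 1" "0 < v" "0 \<le> C''"
    and lam_le: "lam t \<le> C'' * inverse v
                   / (real t powr (- \<alpha>) + real T powr (1 - \<alpha>) - real t powr (1 - \<alpha>))"
  shows "q t * v \<le> C'' / (1 - \<alpha>) * real T powr (\<alpha> - 1)"
proof -
  define R where "R = 1 - (\<Sum>s\<in>{1..<t}. q s)"
  define A where "A = 1 + real T - real t"
  define X where "X = (1 - \<alpha>) * real T powr (- \<alpha>) * A"
  have T: "0 < real T" and A: "0 < A" using t unfolding A_def by auto
  have X: "0 < X" using T A \<open>\<alpha> < 1\<close> unfolding X_def by simp
  obtain k where k: "t = Suc k" using t by (cases t) auto
  have R: "0 \<le> R" "R \<le> A / real T"
    using allocation_remainder_bounds[OF lam q, of k] t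
    by (simp_all add: R_def A_def k atLeastLessThanSuc_atLeastAtMost)
  have lam0: "0 \<le> lam t"
    using lam[OF t] A unfolding A_def[symmetric] by (smt (verit) zero_less_divide_1_iff)
  have lam_v: "lam t * v \<le> C'' / X"
  proof -
    define D where "D = real t powr (- \<alpha>) + real T powr (1 - \<alpha>) - real t powr (1 - \<alpha>)"
    have XD: "X \<le> D"
      using allocation_denominator_ge[of t T \<alpha>] t assms unfolding X_def A_def D_def by auto
    have "lam t * v \<le> C'' * inverse v / D * v"
      using lam_le \<open>0 < v\<close> unfolding D_def by (intro mult_right_mono) auto
    also have "\<dots> = C'' / D"
      using \<open>0 < v\<close> by (simp add: divide_inverse mult_ac)
    also have "\<dots> \<le> C'' / X"
      using XD X \<open>0 \<le> C''\<close> by (intro divide_left_mono) auto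
    finally show ?thesis .
  qed
  have "q t * v = R * (lam t * v)" using q[OF t] by (simp add: R_def)
  also have "\<dots> \<le> A / real T * (C'' / X)"
    using R lam0 lam_v \<open>0 < v\<close> by (intro mult_mono) auto
  also have "A / real T * (C'' / X) = C'' / (1 - \<alpha>) * real T powr (\<alpha> - 1)"
    using T A \<open>\<alpha> < 1\<close> unfolding X_def
    by (simp add: powr_diff powr_minus field_simps)
  finally show ?thesis .
qed

lemma sum_squared_ge_inverse_share_bound:
  fixes h v :: "'i \<Rightarrow> real"
  assumes "\<And>i. i \<in> I \<Longrightarrow> 0 \<le> h i"
    and "(\<Sum>i\<in>I. (h i)\<^sup>2 * v i) = 1"
    and "\<And>i. i \<in> I \<Longrightarrow> (h i)\<^sup>2 * v i * v i \<le> B"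
  shows "1 \<le> B * (\<Sum>i\<in>I. h i)\<^sup>2"
proof -
  have share: "(h i)\<^sup>2 * v i \<le> h i * sqrt B" if i: "i \<in> I" for i
  proof -
    have "(h i * v i)\<^sup>2 \<le> B" using assms(3)[OF i] by (simp add: power2_eq_square mult_ac)
    then have "h i * v i \<le> sqrt B" by (rule real_le_rsqrt)
    then have "h i * (h i * v i) \<le> h i * sqrt B" using assms(1)[OF i] by (rule mult_left_mono)
    then show ?thesis by (simp add: power2_eq_square mult.assoc)
  qed
  have "1 = (\<Sum>i\<in>I. (h i)\<^sup>2 * v i)" using assms(2) by simp
  also have "\<dots> \<le> (\<Sum>i\<in>I. h i * sqrt B)" by (rule sum_mono) (rule share)
  also have "\<dots> = sqrt B * (\<Sum>i\<in>I. h i)" by (simp add: sum_distrib_left mult.commute)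
  finally have le: "1 \<le> sqrt B * (\<Sum>i\<in>I. h i)" .
  then have "1 \<le> (sqrt B * (\<Sum>i\<in>I. h i))\<^sup>2"
    by (simp add: one_le_power)
  moreover have "0 \<le> B"
  proof (rule ccontr)
    assume "\<not> 0 \<le> B"
    then have "sqrt B * (\<Sum>i\<in>I. h i) \<le> 0"
      using assms(1) by (simp add: mult_nonpos_nonneg sum_nonneg)
    then show False using le by simp
  qed
  ultimately show ?thesis by (simp add: power_mult_distrib)
qed

lemma sum_powr_moment_le:
  fixes h v e :: "'i \<Rightarrow> real" and \<delta> :: real
  assumes "0 \<le> \<delta>" "0 \<le> C"
    and h: "\<And>i. i \<in> I \<Longrightarrow> 0 \<le> h i"
    and v: "\<And>i. i \<in> I \<Longrightarrow> 0 \<le> v i \<and> v i \<le> V"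
    and e: "\<And>i. i \<in> I \<Longrightarrow> e i \<le> C * v i powr (2 + \<delta>)"
    and sum: "(\<Sum>i\<in>I. (h i)\<^sup>2 * v i) = 1"
    and share: "\<And>i. i \<in> I \<Longrightarrow> (h i)\<^sup>2 * v i * v i \<le> B"
  shows "(\<Sum>i\<in>I. h i powr (2 + \<delta>) * e i) \<le> C * V * B powr (\<delta> / 2)"
proof -
  have summand: "h i powr (2 + \<delta>) * e i \<le> C * V * B powr (\<delta> / 2) * ((h i)\<^sup>2 * v i)"
    if i: "i \<in> I" for i
  proof -
    define z where "z = (h i)\<^sup>2 * v i * v i"
    have z: "0 \<le> z" "z \<le> B" "z \<le> (h i)\<^sup>2 * v i * V"
      using v[OF i] share[OF i] unfolding z_def by (auto intro: mult_left_mono)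
    have "h i powr (2 + \<delta>) * e i \<le> h i powr (2 + \<delta>) * (C * v i powr (2 + \<delta>))"
      using e[OF i] by (rule mult_left_mono) simp
    also have "\<dots> = C * (h i * v i) powr (2 + \<delta>)"
      using h[OF i] v[OF i] by (simp add: powr_mult)
    also have "(h i * v i) powr (2 + \<delta>) = z * z powr (\<delta> / 2)"
    proof (cases "h i * v i = 0")
      case True
      then show ?thesis by (auto simp: z_def)
    next
      case False
      then have hv: "0 < h i * v i" using h[OF i] v[OF i] by (simp add: less_le)
      have z_eq: "z = (h i * v i) powr 2"
        using hv by (simp add: z_def powr_realpow power2_eq_square mult_ac)
      have "z * z powr (\<delta> / 2) = (h i * v i) powr 2 * (h i * v i) powr (2 * (\<delta> / 2))"
        unfolding z_eq powr_powr ..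
      then show ?thesis by (simp add: powr_add)
    qed
    also have "C * (z * z powr (\<delta> / 2)) \<le> C * ((h i)\<^sup>2 * v i * V * B powr (\<delta> / 2))"
      using z \<open>0 \<le> \<delta>\<close> \<open>0 \<le> C\<close> v[OF i] by (intro mult_left_mono mult_mono powr_mono2) auto
    finally show ?thesis by (simp add: mult_ac)
  qed
  have "(\<Sum>i\<in>I. h i powr (2 + \<delta>) * e i) \<le> (\<Sum>i\<in>I. C * V * B powr (\<delta> / 2) * ((h i)\<^sup>2 * v i))"
    by (rule sum_mono) (rule summand)
  also have "\<dots> = C * V * B powr (\<delta> / 2)"
    using sum by (simp flip: sum_distrib_left)
  finally show ?thesis .
qed

lemma conv_prob_infty_if_eventually_ge:
  assumes "\<And>T. X T \<in> borel_measurable M"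
    and a: "filterlim a at_top sequentially"
    and ge: "eventually (\<lambda>T. \<forall>\<omega>\<in>space M. a T \<le> X T \<omega>) sequentially"
  shows "conv_prob_infty M X"
  unfolding conv_prob_infty_def
proof (intro conjI allI)
  fix K :: real
  have "eventually (\<lambda>T. {\<omega>\<in>space M. X T \<omega> \<le> K} = {}) sequentially"
    using ge filterlim_at_top_dense[THEN iffD1, OF a, rule_format, of K]
    by eventually_elim force
  then show "(\<lambda>T. measure M {\<omega>\<in>space M. X T \<omega> \<le> K}) \<longlonglongrightarrow> 0"
    by (rule tendsto_eventually[OF eventually_mono]) (metis measure_empty)
qed (use assms in auto)

lemma conv_prob_if_eventually_dist_le:
  assumes "\<And>T. X T \<in> borel_measurable M"
    and a: "a \<longlonglongrightarrow> 0"
    and le: "eventually (\<lambda>T. \<forall>\<omega>\<in>space M. \<bar>X T \<omega> - c\<bar> \<le> a T) sequentially"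
  shows "conv_prob M X c"
  unfolding conv_prob_def
proof (intro conjI allI impI)
  fix \<epsilon> :: real assume "0 < \<epsilon>"
  have "eventually (\<lambda>T. {\<omega>\<in>space M. \<epsilon> < \<bar>X T \<omega> - c\<bar>} = {}) sequentially"
    using le order_tendstoD(2)[OF a \<open>0 < \<epsilon>\<close>] by eventually_elim force
  then show "(\<lambda>T. measure M {\<omega>\<in>space M. \<epsilon> < \<bar>X T \<omega> - c\<bar>}) \<longlonglongrightarrow> 0"
    by (rule tendsto_eventually[OF eventually_mono]) (metis measure_empty)
qed (use assms in auto)

lemma conv_Lp_if_eventually_const:
  assumes "\<And>T. X T \<in> borel_measurable M"
    and "eventually (\<lambda>T. \<forall>\<omega>\<in>space M. X T \<omega> = c) sequentially"
  shows "conv_Lp M p X c"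
  unfolding conv_Lp_def
proof (intro conjI allI)
  have "eventually (\<lambda>T. (\<integral>\<^sup>+\<omega>. ennreal (\<bar>X T \<omega> - c\<bar> powr p) \<partial>M) = 0) sequentially"
    using assms(2) by eventually_elim (simp cong: nn_integral_cong)
  then show "(\<lambda>T. \<integral>\<^sup>+\<omega>. ennreal (\<bar>X T \<omega> - c\<bar> powr p) \<partial>M) \<longlonglongrightarrow> 0"
    by (rule tendsto_eventually)
qed (use assms in auto)

section \<open>Conditional laws and histories\<close>

lemma kernel_integral_measurable:
  fixes f :: "'a \<Rightarrow> 'w \<Rightarrow> real"
  assumes f: "(\<lambda>(x, y). f x y) \<in> borel_measurable (N \<Otimes>\<^sub>M Wsp)"
    and nonneg: "\<And>x y. 0 \<le> f x y"
    and P: "P \<in> measurable N (prob_algebra Wsp)"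
  shows "(\<lambda>x. \<integral>y. f x y \<partial>P x) \<in> borel_measurable N"
proof -
  have "(\<lambda>x. enn2real (\<integral>\<^sup>+y. f x y \<partial>P x)) \<in> borel_measurable N"
    using nn_integral_measurable_subprob_algebra2[OF _ measurable_prob_algebraD[OF P]] f
    by measurable
  moreover have "(\<integral>y. f x y \<partial>P x) = enn2real (\<integral>\<^sup>+y. f x y \<partial>P x)" if "x \<in> space N" for x
  proof -
    have "sets (P x) = sets Wsp"
      using measurable_space[OF P that] by (simp add: space_prob_algebra)
    then have "f x \<in> borel_measurable (P x)"
      using measurable_Pair2[OF f] that by (simp cong: measurable_cong_sets)
    then show ?thesis using nonneg by (simp add: integral_eq_nn_integral)
  qed
  ultimately show ?thesis by (simp cong: measurable_cong)
qed

locale conditional_law = prob_space M for M :: "'a measure" +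
  fixes F :: "'a measure" and Wsp :: "'w measure" and W :: "'a \<Rightarrow> 'w" and P :: "'a \<Rightarrow> 'w measure"
  assumes subalg: "subalgebra M F"
    and W_measurable: "W \<in> measurable M Wsp"
    and P_measurable: "P \<in> measurable F (prob_algebra Wsp)"
    and law: "\<And>A E. A \<in> sets Wsp \<Longrightarrow> E \<in> sets F \<Longrightarrow>
                measure M ({\<omega>\<in>space M. W \<omega> \<in> A} \<inter> E) = (\<integral>\<omega>. indicator E \<omega> * measure (P \<omega>) A \<partial>M)"
begin

abbreviation F' :: "'a measure" where
  "F' \<equiv> restr_to_subalg M F"

lemma space_F [simp]: "space F = space M" and sets_F': "sets F' = sets F"
  using subalg by (auto simp: subalgebra_def sets_restr_to_subalg)

lemma kernel_prob_space:
  assumes "\<omega> \<in> space M"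
  shows "prob_space (P \<omega>)" and "sets (P \<omega>) = sets Wsp"
    and space_kernel: "space (P \<omega>) = space Wsp"
proof -
  have "P \<omega> \<in> space (prob_algebra Wsp)"
    using measurable_space[OF P_measurable] assms by simp
  then show "prob_space (P \<omega>)" and *: "sets (P \<omega>) = sets Wsp"
    by (auto simp: space_prob_algebra)
  from * show "space (P \<omega>) = space Wsp" by (rule sets_eq_imp_space_eq)
qed

lemma emeasure_rectangle:
  assumes a: "a \<in> sets F" and b: "b \<in> sets Wsp"
  shows "emeasure M ({\<omega>\<in>space M. W \<omega> \<in> b} \<inter> a) = (\<integral>\<^sup>+\<omega>. indicator a \<omega> * measure (P \<omega>) b \<partial>F')"
proof -
  define f where "f \<omega> = indicator a \<omega> * measure (P \<omega>) b" for \<omega>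
  have fF: "f \<in> borel_measurable F"
    unfolding f_def
    using a measurable_compose[OF P_measurable measurable_measure_prob_algebra[OF b]]
    by measurable
  have f01: "0 \<le> f \<omega> \<and> f \<omega> \<le> 1" if "\<omega> \<in> space M" for \<omega>
  proof -
    interpret p: prob_space "P \<omega>" using kernel_prob_space[OF that] by simp
    show ?thesis unfolding f_def by (auto simp: indicator_def)
  qed
  have fint: "integrable M f"
    using measurable_from_subalg[OF subalg fF] f01 by (intro integrable_const_bound[where B=1]) auto
  have "emeasure M ({\<omega>\<in>space M. W \<omega> \<in> b} \<inter> a) = ennreal (\<integral>\<omega>. f \<omega> \<partial>M)"
    using law[OF b a] by (simp add: emeasure_eq_measure f_def)
  also have "\<dots> = (\<integral>\<^sup>+\<omega>. f \<omega> \<partial>M)"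
    using fint f01 by (intro nn_integral_eq_integral[symmetric]) auto
  also have "\<dots> = (\<integral>\<^sup>+\<omega>. f \<omega> \<partial>F')"
    using fF by (intro nn_integral_subalgebra2[symmetric, OF subalg]) simp
  finally show ?thesis by (simp add: f_def)
qed

definition joint_kernel :: "'a \<Rightarrow> ('a \<times> 'w) measure" where
  "joint_kernel \<omega> = distr (P \<omega>) (F' \<Otimes>\<^sub>M Wsp) (Pair \<omega>)"

lemma joint_kernel_measurable: "joint_kernel \<in> measurable F' (subprob_algebra (F' \<Otimes>\<^sub>M Wsp))"
proof -
  have "P \<in> measurable F' (subprob_algebra Wsp)"
    using measurable_prob_algebraD[OF P_measurable]
    by (simp cong: measurable_cong_sets add: sets_F')
  then show ?thesis
    unfolding joint_kernel_def by (rule measurable_distr2[rotated]) simp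
qed

lemma Pair_measurable_kernel:
  "\<omega> \<in> space M \<Longrightarrow> Pair \<omega> \<in> measurable (P \<omega>) (F' \<Otimes>\<^sub>M Wsp)"
  using measurable_Pair1'[of \<omega> F' Wsp] kernel_prob_space[of \<omega>]
  by (simp cong: measurable_cong_sets add: space_restr_to_subalg)

lemma Pair_W_measurable: "(\<lambda>\<omega>. (\<omega>, W \<omega>)) \<in> measurable M (F' \<Otimes>\<^sub>M Wsp)"
proof (rule measurable_Pair[OF _ W_measurable])
  show "(\<lambda>\<omega>. \<omega>) \<in> measurable M F'"
    using subalg sets_F' sets.Int_space_eq2 unfolding subalgebra_def measurable_def
    by (auto simp: space_restr_to_subalg)
qed

lemma measurable_compose_W:
  "(\<lambda>(\<omega>, w). g \<omega> w) \<in> measurable (F \<Otimes>\<^sub>M Wsp) N \<Longrightarrow> (\<lambda>\<omega>. g \<omega> (W \<omega>)) \<in> measurable M N"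
  using measurable_compose[OF Pair_W_measurable, of "\<lambda>(\<omega>, w). g \<omega> w" N]
  by (simp cong: measurable_cong_sets add: sets_F')

lemma emeasure_joint_kernel_Times:
  assumes \<omega>: "\<omega> \<in> space M" and a: "a \<in> sets F" and b: "b \<in> sets Wsp"
  shows "emeasure (joint_kernel \<omega>) (a \<times> b) = indicator a \<omega> * measure (P \<omega>) b"
proof -
  interpret p: prob_space "P \<omega>" using kernel_prob_space[OF \<omega>] by simp
  have "Pair \<omega> -` (a \<times> b) \<inter> space (P \<omega>) = (if \<omega> \<in> a then b else {})"
    using space_kernel[OF \<omega>] b sets.sets_into_space by auto
  then show ?thesis
    unfolding joint_kernel_def using Pair_measurable_kernel[OF \<omega>] a b sets_F'
    by (simp add: emeasure_distr indicator_def p.emeasure_eq_measure)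
qed

lemma distr_Pair_eq_bind_joint_kernel:
  "distr M (F' \<Otimes>\<^sub>M Wsp) (\<lambda>\<omega>. (\<omega>, W \<omega>)) = F' \<bind> joint_kernel"
proof (rule measure_eqI_generator_eq[OF Int_stable_pair_measure_generator[of F' Wsp]
      pair_measure_closed])
  have ne: "space F' \<noteq> {}" by (simp add: space_restr_to_subalg not_empty)
  show "sets (distr M (F' \<Otimes>\<^sub>M Wsp) (\<lambda>\<omega>. (\<omega>, W \<omega>)))
      = sigma_sets (space F' \<times> space Wsp) {a \<times> b |a b. a \<in> sets F' \<and> b \<in> sets Wsp}"
    by (simp add: sets_pair_measure)
  show "sets (F' \<bind> joint_kernel)
      = sigma_sets (space F' \<times> space Wsp) {a \<times> b |a b. a \<in> sets F' \<and> b \<in> sets Wsp}"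
    using sets_bind[of F' joint_kernel "F' \<Otimes>\<^sub>M Wsp", OF _ ne]
    by (simp add: joint_kernel_def sets_pair_measure)
  show "range (\<lambda>_. space F' \<times> space Wsp) \<subseteq> {a \<times> b |a b. a \<in> sets F' \<and> b \<in> sets Wsp}"
    by blast
  show "(\<Union>i::nat. space F' \<times> space Wsp) = space F' \<times> space Wsp" by simp
  show "emeasure (distr M (F' \<Otimes>\<^sub>M Wsp) (\<lambda>\<omega>. (\<omega>, W \<omega>))) (space F' \<times> space Wsp) \<noteq> \<infinity>" for i :: nat
    using Pair_W_measurable by (simp add: emeasure_distr space_pair_measure[symmetric])
next
  fix X assume "X \<in> {a \<times> b |a b. a \<in> sets F' \<and> b \<in> sets Wsp}"
  then obtain a b where X: "X = a \<times> b" and a: "a \<in> sets F" and b: "b \<in> sets Wsp"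
    using sets_F' by auto
  have X_sets: "X \<in> sets (F' \<Otimes>\<^sub>M Wsp)" using X a b sets_F' by auto
  have a_space: "a \<subseteq> space M" using a sets.sets_into_space by fastforce
  have "emeasure (distr M (F' \<Otimes>\<^sub>M Wsp) (\<lambda>\<omega>. (\<omega>, W \<omega>))) X
      = emeasure M ({\<omega>\<in>space M. W \<omega> \<in> b} \<inter> a)"
    using X_sets X a_space Pair_W_measurable
    by (subst emeasure_distr) (auto intro!: arg_cong[where f="emeasure M"])
  also have "\<dots> = (\<integral>\<^sup>+\<omega>. emeasure (joint_kernel \<omega>) X \<partial>F')"
    unfolding emeasure_rectangle[OF a b] X
    by (intro nn_integral_cong) (simp add: emeasure_joint_kernel_Times a b space_restr_to_subalg)
  also have "\<dots> = emeasure (F' \<bind> joint_kernel) X"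
    by (rule emeasure_bind[symmetric, OF _ joint_kernel_measurable X_sets])
       (simp add: space_restr_to_subalg not_empty)
  finally show "emeasure (distr M (F' \<Otimes>\<^sub>M Wsp) (\<lambda>\<omega>. (\<omega>, W \<omega>))) X = emeasure (F' \<bind> joint_kernel) X" .
qed

lemma nn_integral_conditional_law:
  assumes g: "(\<lambda>(\<omega>, w). g \<omega> w) \<in> borel_measurable (F \<Otimes>\<^sub>M Wsp)"
  shows "(\<integral>\<^sup>+\<omega>. g \<omega> (W \<omega>) \<partial>M) = (\<integral>\<^sup>+\<omega>. \<integral>\<^sup>+w. g \<omega> w \<partial>P \<omega> \<partial>M)"
proof -
  have g': "(\<lambda>(\<omega>, w). g \<omega> w) \<in> borel_measurable (F' \<Otimes>\<^sub>M Wsp)"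
    using g by (simp cong: measurable_cong_sets add: sets_F')
  have "(\<integral>\<^sup>+\<omega>. g \<omega> (W \<omega>) \<partial>M)
      = (\<integral>\<^sup>+x. (\<lambda>(\<omega>, w). g \<omega> w) x \<partial>distr M (F' \<Otimes>\<^sub>M Wsp) (\<lambda>\<omega>. (\<omega>, W \<omega>)))"
    using g' Pair_W_measurable by (subst nn_integral_distr) auto
  also have "\<dots> = (\<integral>\<^sup>+\<omega>. \<integral>\<^sup>+x. (\<lambda>(\<omega>, w). g \<omega> w) x \<partial>joint_kernel \<omega> \<partial>F')"
    unfolding distr_Pair_eq_bind_joint_kernel
    by (rule nn_integral_bind[OF g' joint_kernel_measurable])
  also have "\<dots> = (\<integral>\<^sup>+\<omega>. \<integral>\<^sup>+w. g \<omega> w \<partial>P \<omega> \<partial>F')"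
    using g' Pair_measurable_kernel
    by (intro nn_integral_cong) (simp add: joint_kernel_def nn_integral_distr space_restr_to_subalg)
  also have "\<dots> = (\<integral>\<^sup>+\<omega>. \<integral>\<^sup>+w. g \<omega> w \<partial>P \<omega> \<partial>M)"
    using nn_integral_measurable_subprob_algebra2[OF g measurable_prob_algebraD[OF P_measurable]]
    by (rule nn_integral_subalgebra2[OF subalg])
  finally show ?thesis .
qed

end

lemma space_hist [simp]: "space (hist M Wsp Y W n) = space M"
  and sets_hist: "sets (hist M Wsp Y W n) = sigma_sets (space M)
     {(\<lambda>\<omega>. (Y s (W s \<omega>) \<omega>, W s \<omega>)) -` A \<inter> space M | s A. s \<in> {1..n} \<and> A \<in> sets (borel \<Otimes>\<^sub>M Wsp)}"
  unfolding hist_def by (auto intro!: space_measure_of sets_measure_of)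

lemma subalgebra_hist:
  assumes "\<And>t. 1 \<le> t \<Longrightarrow> W t \<in> measurable M Wsp"
    and "\<And>t. 1 \<le> t \<Longrightarrow> (\<lambda>\<omega>. Y t (W t \<omega>) \<omega>) \<in> borel_measurable M"
  shows "subalgebra M (hist M Wsp Y W n)"
  unfolding subalgebra_def sets_hist space_hist
proof (intro conjI refl sets.sigma_sets_subset subsetI)
  fix E assume "E \<in> {(\<lambda>\<omega>. (Y s (W s \<omega>) \<omega>, W s \<omega>)) -` A \<inter> space M | s A.
                      s \<in> {1..n} \<and> A \<in> sets (borel \<Otimes>\<^sub>M Wsp)}"
  then obtain s A where E: "E = (\<lambda>\<omega>. (Y s (W s \<omega>) \<omega>, W s \<omega>)) -` A \<inter> space M"
    and s: "1 \<le> s" and A: "A \<in> sets (borel \<Otimes>\<^sub>M Wsp)" by auto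
  have "(\<lambda>\<omega>. (Y s (W s \<omega>) \<omega>, W s \<omega>)) \<in> measurable M (borel \<Otimes>\<^sub>M Wsp)"
    using assms s by (intro measurable_Pair) auto
  then show "E \<in> sets M" unfolding E using A by (rule measurable_sets)
qed

lemma subalgebra_hist_mono:
  "n \<le> m \<Longrightarrow> subalgebra (hist M Wsp Y W m) (hist M Wsp Y W n)"
  unfolding subalgebra_def sets_hist space_hist
  by (intro conjI refl sigma_sets_mono') force

lemma sets_hist_subset_hist_fut: "sets (hist M Wsp Y W (t - 1)) \<subseteq> sets (hist_fut M Wsp Y W t)"
proof -
  have "sets (hist M Wsp Y W (t - 1)) \<union>
      {Y s w -` B \<inter> space M | s w B. t \<le> s \<and> w \<in> space Wsp \<and> B \<in> sets borel} \<subseteq> Pow (space M)"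
    using sets.sets_into_space[of _ "hist M Wsp Y W (t - 1)"] by auto
  then show ?thesis unfolding hist_fut_def by (auto simp: sets_measure_of)
qed

section \<open>The adaptive allocation scheme\<close>

locale adaptive_allocation = prob_space M for M :: "'a measure" +
  fixes Wsp :: "'w measure" and Y :: "nat \<Rightarrow> 'w \<Rightarrow> 'a \<Rightarrow> real" and W :: "nat \<Rightarrow> 'a \<Rightarrow> 'w"
    and P :: "nat \<Rightarrow> 'a \<Rightarrow> 'w measure" and \<gamma> :: "nat \<Rightarrow> 'a \<Rightarrow> 'w \<Rightarrow> real"
    and lam h :: "nat \<Rightarrow> nat \<Rightarrow> 'a \<Rightarrow> real" and \<delta> \<alpha> C C' C'' :: real
  assumes W_measurable: "1 \<le> t \<Longrightarrow> W t \<in> measurable M Wsp"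
    and Y_observed_measurable: "1 \<le> t \<Longrightarrow> (\<lambda>\<omega>. Y t (W t \<omega>) \<omega>) \<in> borel_measurable M"
    and P_measurable: "1 \<le> t \<Longrightarrow> P t \<in> measurable (hist M Wsp Y W (t - 1)) (prob_algebra Wsp)"
    and P_law: "1 \<le> t \<Longrightarrow> A \<in> sets Wsp \<Longrightarrow> E \<in> sets (hist M Wsp Y W (t - 1)) \<Longrightarrow>
        measure M ({\<omega>\<in>space M. W t \<omega> \<in> A} \<inter> E) = (\<integral>\<omega>. indicator E \<omega> * measure (P t \<omega>) A \<partial>M)"
    and \<gamma>_measurable: "1 \<le> t \<Longrightarrow>
        (\<lambda>(\<omega>, w). \<gamma> t \<omega> w) \<in> borel_measurable (hist M Wsp Y W (t - 1) \<Otimes>\<^sub>M Wsp)"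
    and \<gamma>_L2: "1 \<le> t \<Longrightarrow> \<omega> \<in> space M \<Longrightarrow> \<gamma> t \<omega> \<in> L2k (P t \<omega>)"
    and \<gamma>_sq_pos: "1 \<le> t \<Longrightarrow> \<omega> \<in> space M \<Longrightarrow> 0 < (\<integral>w. (\<gamma> t \<omega> w)\<^sup>2 \<partial>P t \<omega>)"
    and \<gamma>_ratio: "1 \<le> t \<Longrightarrow> \<omega> \<in> space M \<Longrightarrow>
        (\<integral>w. \<bar>\<gamma> t \<omega> w\<bar> powr (2 + \<delta>) \<partial>P t \<omega>) / (\<integral>w. (\<gamma> t \<omega> w)\<^sup>2 \<partial>P t \<omega>) powr (2 + \<delta>) \<le> C"
    and \<gamma>_sq_le: "1 \<le> t \<Longrightarrow> \<omega> \<in> space M \<Longrightarrow> (\<integral>w. (\<gamma> t \<omega> w)\<^sup>2 \<partial>P t \<omega>) \<le> C' * real t powr \<alpha>"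
    and lam_measurable: "t \<in> {1..T} \<Longrightarrow> lam T t \<in> borel_measurable (hist M Wsp Y W (t - 1))"
    and lam_le_1: "t \<in> {1..T} \<Longrightarrow> \<omega> \<in> space M \<Longrightarrow> lam T t \<omega> \<le> 1"
    and lam_bounds: "t \<in> {1..T} \<Longrightarrow> \<omega> \<in> space M \<Longrightarrow>
        1 / (1 + real T - real t) \<le> lam T t \<omega> \<and>
        lam T t \<omega> \<le> C'' * inverse (\<integral>w. (\<gamma> t \<omega> w)\<^sup>2 \<partial>P t \<omega>)
          / (real t powr (- \<alpha>) + real T powr (1 - \<alpha>) - real t powr (1 - \<alpha>))"
    and h_rec: "t \<in> {1..T} \<Longrightarrow> \<omega> \<in> space M \<Longrightarrow> 0 \<le> h T t \<omega> \<and>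
        (h T t \<omega>)\<^sup>2 * (\<integral>w. (\<gamma> t \<omega> w)\<^sup>2 \<partial>P t \<omega>)
        = (1 - (\<Sum>s\<in>{1..<t}. (h T s \<omega>)\<^sup>2 * (\<integral>w. (\<gamma> s \<omega> w)\<^sup>2 \<partial>P s \<omega>))) * lam T t \<omega>"
    and \<delta>_pos: "0 < \<delta>" and \<alpha>_nonneg: "0 \<le> \<alpha>" and \<alpha>_less: "\<alpha> < \<delta> / (2 + \<delta>)"
    and C_pos: "0 < C" and C'_pos: "0 < C'" and C''_pos: "0 < C''"
begin

abbreviation past :: "nat \<Rightarrow> 'a measure" where
  "past t \<equiv> hist M Wsp Y W (t - 1)"

definition cond_sq_moment :: "nat \<Rightarrow> 'a \<Rightarrow> real" where
  "cond_sq_moment t \<omega> = (\<integral>w. (\<gamma> t \<omega> w)\<^sup>2 \<partial>P t \<omega>)"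

definition cond_abs_moment :: "nat \<Rightarrow> 'a \<Rightarrow> real" where
  "cond_abs_moment t \<omega> = (\<integral>w. \<bar>\<gamma> t \<omega> w\<bar> powr (2 + \<delta>) \<partial>P t \<omega>)"

definition share :: "nat \<Rightarrow> nat \<Rightarrow> 'a \<Rightarrow> real" where
  "share T t \<omega> = (h T t \<omega>)\<^sup>2 * cond_sq_moment t \<omega>"

definition share_bound :: "nat \<Rightarrow> real" where
  "share_bound T = C'' / (1 - \<alpha>) * real T powr (\<alpha> - 1)"

definition total_variance :: "nat \<Rightarrow> real" where
  "total_variance T = (\<integral>\<omega>. (\<Sum>t=1..T. (h T t \<omega>)\<^sup>2 * (\<gamma> t \<omega> (W t \<omega>))\<^sup>2) \<partial>M)"

lemma subalgebra_past: "subalgebra M (past t)"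
  by (rule subalgebra_hist) (use W_measurable Y_observed_measurable in auto)

lemma measurable_past_le: "s \<le> t \<Longrightarrow> f \<in> borel_measurable (past s) \<Longrightarrow> f \<in> borel_measurable (past t)"
  using measurable_from_subalg[OF subalgebra_hist_mono] by (metis diff_le_mono)

lemma measurable_past: "f \<in> borel_measurable (past t) \<Longrightarrow> f \<in> borel_measurable M"
  by (rule measurable_from_subalg[OF subalgebra_past])

lemma conditional_law_past: "1 \<le> t \<Longrightarrow> conditional_law M (past t) Wsp (W t) (P t)"
  using subalgebra_past W_measurable P_measurable P_law
  by unfold_locales auto

lemma cond_sq_moment_measurable_past: "1 \<le> t \<Longrightarrow> cond_sq_moment t \<in> borel_measurable (past t)"
  unfolding cond_sq_moment_def using \<gamma>_measurable P_measurable
  by (intro kernel_integral_measurable) auto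

lemma cond_abs_moment_measurable_past: "1 \<le> t \<Longrightarrow> cond_abs_moment t \<in> borel_measurable (past t)"
  unfolding cond_abs_moment_def using \<gamma>_measurable P_measurable
  by (intro kernel_integral_measurable) auto

lemma cond_sq_moment_pos: "1 \<le> t \<Longrightarrow> \<omega> \<in> space M \<Longrightarrow> 0 < cond_sq_moment t \<omega>"
  unfolding cond_sq_moment_def by (rule \<gamma>_sq_pos)

lemma cond_abs_moment_le:
  "1 \<le> t \<Longrightarrow> \<omega> \<in> space M \<Longrightarrow> cond_abs_moment t \<omega> \<le> C * cond_sq_moment t \<omega> powr (2 + \<delta>)"
  using \<gamma>_ratio[of t \<omega>] cond_sq_moment_pos[of t \<omega>]
  by (simp add: cond_abs_moment_def cond_sq_moment_def pos_divide_le_eq)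

lemma cond_sq_moment_le:
  assumes "t \<in> {1..T}" "\<omega> \<in> space M"
  shows "cond_sq_moment t \<omega> \<le> C' * real T powr \<alpha>"
proof -
  have "C' * real t powr \<alpha> \<le> C' * real T powr \<alpha>"
    using assms \<alpha>_nonneg C'_pos by (intro mult_left_mono powr_mono2) auto
  then show ?thesis
    using \<gamma>_sq_le[of t \<omega>] assms by (simp add: cond_sq_moment_def)
qed

lemma h_eq_sqrt:
  assumes "t \<in> {1..T}" "\<omega> \<in> space M"
  shows "h T t \<omega> = sqrt ((1 - (\<Sum>s\<in>{1..<t}. share T s \<omega>)) * lam T t \<omega> / cond_sq_moment t \<omega>)"
proof -
  have "(h T t \<omega>)\<^sup>2 = (1 - (\<Sum>s\<in>{1..<t}. share T s \<omega>)) * lam T t \<omega> / cond_sq_moment t \<omega>"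
    using h_rec[OF assms] cond_sq_moment_pos[of t \<omega>] assms
    by (simp add: share_def cond_sq_moment_def field_simps)
  then show ?thesis using h_rec[OF assms] by (simp add: real_sqrt_unique)
qed

lemma h_measurable_past: "t \<in> {1..T} \<Longrightarrow> h T t \<in> borel_measurable (past t)"
proof (induction t rule: less_induct)
  case (less t)
  then have t: "1 \<le> t" by simp
  have [measurable]: "share T s \<in> borel_measurable (past t)" if "s \<in> {1..<t}" for s
    using less.IH[of s] cond_sq_moment_measurable_past[of s] that less.prems
    unfolding share_def by (intro measurable_past_le[of s t]) auto
  note [measurable] = cond_sq_moment_measurable_past[OF t] lam_measurable[OF less.prems]
  have "(\<lambda>\<omega>. sqrt ((1 - (\<Sum>s\<in>{1..<t}. share T s \<omega>)) * lam T t \<omega> / cond_sq_moment t \<omega>))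
      \<in> borel_measurable (past t)"
    by measurable
  then show ?case
    by (rule measurable_cong[THEN iffD2, rotated]) (simp add: h_eq_sqrt[OF less.prems])
qed

lemma share_measurable: "t \<in> {1..T} \<Longrightarrow> share T t \<in> borel_measurable M"
  unfolding share_def using h_measurable_past cond_sq_moment_measurable_past
  by (intro measurable_past borel_measurable_times borel_measurable_power) auto

lemma \<alpha>_less_1: "\<alpha> < 1"
proof -
  have "\<delta> / (2 + \<delta>) < 1" using \<delta>_pos by simp
  then show ?thesis using \<alpha>_less by linarith
qed

lemma lam_between: "t \<in> {1..T} \<Longrightarrow> \<omega> \<in> space M \<Longrightarrow>
    1 / (1 + real T - real t) \<le> lam T t \<omega> \<and> lam T t \<omega> \<le> 1"
  using lam_bounds lam_le_1 by blast

lemma share_rec: "t \<in> {1..T} \<Longrightarrow> \<omega> \<in> space M \<Longrightarrow>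
    share T t \<omega> = (1 - (\<Sum>s\<in>{1..<t}. share T s \<omega>)) * lam T t \<omega>"
  using h_rec by (simp add: share_def cond_sq_moment_def)

lemma sum_share_eq_1: "1 \<le> T \<Longrightarrow> \<omega> \<in> space M \<Longrightarrow> (\<Sum>t=1..T. share T t \<omega>) = 1"
  using allocation_remainder_bounds[of T "\<lambda>t. lam T t \<omega>" "\<lambda>t. share T t \<omega>" T]
    lam_between share_rec by simp

lemma share_nonneg: "t \<in> {1..T} \<Longrightarrow> \<omega> \<in> space M \<Longrightarrow> 0 \<le> share T t \<omega>"
  by (simp add: share_def cond_sq_moment_pos less_imp_le)

lemma share_mult_cond_sq_moment_le:
  assumes "t \<in> {1..T}" "\<omega> \<in> space M"
  shows "share T t \<omega> * cond_sq_moment t \<omega> \<le> share_bound T"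
  unfolding share_bound_def
  using assms lam_between share_rec lam_bounds[OF assms] cond_sq_moment_pos[of t \<omega>]
    \<alpha>_nonneg \<alpha>_less_1 C''_pos
  by (intro allocation_share_mult_le[where lam="\<lambda>t. lam T t \<omega>"]) (auto simp: cond_sq_moment_def)

lemma nn_integral_realized_variance:
  assumes t: "t \<in> {1..T}"
  shows "(\<integral>\<^sup>+\<omega>. (h T t \<omega>)\<^sup>2 * (\<gamma> t \<omega> (W t \<omega>))\<^sup>2 \<partial>M) = (\<integral>\<^sup>+\<omega>. share T t \<omega> \<partial>M)"
proof -
  have t1: "1 \<le> t" using t by simp
  interpret conditional_law M "past t" Wsp "W t" "P t"
    by (rule conditional_law_past[OF t1])
  note [measurable] = \<gamma>_measurable[OF t1] h_measurable_past[OF t]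
  have "(\<integral>\<^sup>+\<omega>. (h T t \<omega>)\<^sup>2 * (\<gamma> t \<omega> (W t \<omega>))\<^sup>2 \<partial>M)
      = (\<integral>\<^sup>+\<omega>. \<integral>\<^sup>+w. (h T t \<omega>)\<^sup>2 * (\<gamma> t \<omega> w)\<^sup>2 \<partial>P t \<omega> \<partial>M)"
    by (rule nn_integral_conditional_law) measurable
  also have "\<dots> = (\<integral>\<^sup>+\<omega>. \<integral>\<^sup>+w. ennreal ((h T t \<omega>)\<^sup>2) * (\<gamma> t \<omega> w)\<^sup>2 \<partial>P t \<omega> \<partial>M)"
    by (simp add: ennreal_mult)
  also have "\<dots> = (\<integral>\<^sup>+\<omega>. share T t \<omega> \<partial>M)"
  proof (rule nn_integral_cong)
    fix \<omega> assume \<omega>: "\<omega> \<in> space M"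
    have [measurable]: "\<gamma> t \<omega> \<in> borel_measurable (P t \<omega>)"
      and "integrable (P t \<omega>) (\<lambda>w. (\<gamma> t \<omega> w)\<^sup>2)"
      using \<gamma>_L2[OF t1 \<omega>] by (auto simp: L2k_def)
    then have "(\<integral>\<^sup>+w. (\<gamma> t \<omega> w)\<^sup>2 \<partial>P t \<omega>) = cond_sq_moment t \<omega>"
      unfolding cond_sq_moment_def by (intro nn_integral_eq_integral) auto
    then show "(\<integral>\<^sup>+w. ennreal ((h T t \<omega>)\<^sup>2) * (\<gamma> t \<omega> w)\<^sup>2 \<partial>P t \<omega>) = share T t \<omega>"
      using cond_sq_moment_pos[OF t1 \<omega>] by (simp add: nn_integral_cmult share_def ennreal_mult)
  qed
  finally show ?thesis .
qed

lemma realized_variance_measurable: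
  "t \<in> {1..T} \<Longrightarrow> (\<lambda>\<omega>. (h T t \<omega>)\<^sup>2 * (\<gamma> t \<omega> (W t \<omega>))\<^sup>2) \<in> borel_measurable M"
proof -
  assume t: "t \<in> {1..T}"
  then interpret conditional_law M "past t" Wsp "W t" "P t"
    by (intro conditional_law_past) simp
  note [measurable] = \<gamma>_measurable h_measurable_past[OF t]
  show ?thesis
    using t by (intro measurable_compose_W) measurable
qed

lemma total_variance_eq_1:
  assumes "1 \<le> T"
  shows "total_variance T = 1"
proof -
  note realized_variance_measurable [measurable] share_measurable [measurable]
  have "(\<integral>\<^sup>+\<omega>. (\<Sum>t=1..T. (h T t \<omega>)\<^sup>2 * (\<gamma> t \<omega> (W t \<omega>))\<^sup>2) \<partial>M)
      = (\<Sum>t=1..T. \<integral>\<^sup>+\<omega>. (h T t \<omega>)\<^sup>2 * (\<gamma> t \<omega> (W t \<omega>))\<^sup>2 \<partial>M)"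
    by (subst nn_integral_sum[symmetric]) (auto intro!: nn_integral_cong)
  also have "\<dots> = (\<Sum>t=1..T. \<integral>\<^sup>+\<omega>. share T t \<omega> \<partial>M)"
    by (simp add: nn_integral_realized_variance)
  also have "\<dots> = (\<integral>\<^sup>+\<omega>. (\<Sum>t=1..T. ennreal (share T t \<omega>)) \<partial>M)"
    by (subst nn_integral_sum) auto
  also have "\<dots> = (\<integral>\<^sup>+\<omega>. 1 \<partial>M)"
  proof (rule nn_integral_cong)
    fix \<omega> assume "\<omega> \<in> space M"
    then show "(\<Sum>t=1..T. ennreal (share T t \<omega>)) = 1"
      using sum_share_eq_1[OF assms] share_nonneg by (subst sum_ennreal) auto
  qed
  also have "\<dots> = 1" by (simp add: emeasure_space_1)
  finally show ?thesis
    unfolding total_variance_def by (subst integral_eq_nn_integral) (auto intro!: sum_nonneg)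
qed

lemma h_measurable [measurable]: "t \<in> {1..T} \<Longrightarrow> h T t \<in> borel_measurable M"
  by (rule measurable_past[OF h_measurable_past])

lemma cond_abs_moment_measurable [measurable]: "1 \<le> t \<Longrightarrow> cond_abs_moment t \<in> borel_measurable M"
  by (rule measurable_past[OF cond_abs_moment_measurable_past])

lemma share_bound_pos: "1 \<le> T \<Longrightarrow> 0 < share_bound T"
  using C''_pos \<alpha>_less_1 by (simp add: share_bound_def)

lemma share_bound_tendsto_0: "share_bound \<longlonglongrightarrow> 0"
  unfolding share_bound_def using \<alpha>_less_1
  by (intro tendsto_mult_right_zero tendsto_neg_powr filterlim_real_sequentially) simp

lemma sum_h_squared_ge:
  assumes T: "1 \<le> T" and \<omega>: "\<omega> \<in> space M"
  shows "1 \<le> share_bound T * (\<Sum>t=1..T. h T t \<omega>)\<^sup>2"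
proof (rule sum_squared_ge_inverse_share_bound)
  show "0 \<le> h T t \<omega>" if "t \<in> {1..T}" for t
    using h_rec[OF that \<omega>] by simp
  show "(\<Sum>t=1..T. (h T t \<omega>)\<^sup>2 * cond_sq_moment t \<omega>) = 1"
    using sum_share_eq_1[OF T \<omega>] by (simp add: share_def)
  show "(h T t \<omega>)\<^sup>2 * cond_sq_moment t \<omega> * cond_sq_moment t \<omega> \<le> share_bound T" if "t \<in> {1..T}" for t
    using share_mult_cond_sq_moment_le[OF that \<omega>] by (simp add: share_def)
qed

lemma sum_h_squared_over_total_variance_tendsto_infinity:
  "conv_prob_infty M (\<lambda>T \<omega>. (\<Sum>t=1..T. h T t \<omega>)\<^sup>2 / total_variance T)"
proof (rule conv_prob_infty_if_eventually_ge)
  show "filterlim (\<lambda>T. inverse (share_bound T)) at_top sequentially"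
    using share_bound_tendsto_0 eventually_mono[OF eventually_ge_at_top[of 1] share_bound_pos]
    by (rule filterlim_inverse_at_top)
  show "eventually (\<lambda>T. \<forall>\<omega>\<in>space M.
      inverse (share_bound T) \<le> (\<Sum>t=1..T. h T t \<omega>)\<^sup>2 / total_variance T) sequentially"
    using eventually_ge_at_top[of 1]
  proof eventually_elim
    case (elim T)
    then show ?case
      using sum_h_squared_ge[OF elim] share_bound_pos[OF elim]
      by (simp add: total_variance_eq_1 inverse_eq_divide divide_le_eq mult.commute)
  qed
qed measurable

lemma conditional_variance_ratio_conv_L2:
  "conv_Lp M 2 (\<lambda>T \<omega>. (\<Sum>t=1..T. share T t \<omega>) / total_variance T) 1"
proof (rule conv_Lp_if_eventually_const)
  show "eventually (\<lambda>T. \<forall>\<omega>\<in>space M. (\<Sum>t=1..T. share T t \<omega>) / total_variance T = 1) sequentially"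
    using eventually_ge_at_top[of 1]
  proof eventually_elim
    case (elim T)
    then show ?case using sum_share_eq_1[OF elim] total_variance_eq_1[OF elim] by simp
  qed
qed (use share_measurable in measurable)

lemma lyapunov_sum_le:
  assumes T: "1 \<le> T" and \<omega>: "\<omega> \<in> space M"
  shows "(\<Sum>t=1..T. h T t \<omega> powr (2 + \<delta>) * cond_abs_moment t \<omega>)
           \<le> C * (C' * real T powr \<alpha>) * share_bound T powr (\<delta> / 2)"
proof (rule sum_powr_moment_le)
  fix t assume t: "t \<in> {1..T}"
  then show "0 \<le> h T t \<omega>" using h_rec[OF t \<omega>] by simp
  show "0 \<le> cond_sq_moment t \<omega> \<and> cond_sq_moment t \<omega> \<le> C' * real T powr \<alpha>"
    using cond_sq_moment_pos[of t \<omega>] cond_sq_moment_le[OF t \<omega>] t \<omega> by simp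
  show "cond_abs_moment t \<omega> \<le> C * cond_sq_moment t \<omega> powr (2 + \<delta>)"
    using cond_abs_moment_le[of t \<omega>] t \<omega> by simp
  show "(h T t \<omega>)\<^sup>2 * cond_sq_moment t \<omega> * cond_sq_moment t \<omega> \<le> share_bound T"
    using share_mult_cond_sq_moment_le[OF t \<omega>] by (simp add: share_def)
next
  show "(\<Sum>t=1..T. (h T t \<omega>)\<^sup>2 * cond_sq_moment t \<omega>) = 1"
    using sum_share_eq_1[OF T \<omega>] by (simp add: share_def)
qed (use \<delta>_pos C_pos in auto)

lemma lyapunov_bound_tendsto_0:
  "(\<lambda>T. C * (C' * real T powr \<alpha>) * share_bound T powr (\<delta> / 2)) \<longlonglongrightarrow> 0"
proof -
  define K where "K = C'' / (1 - \<alpha>)"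
  define \<rho> where "\<rho> = \<alpha> + (\<alpha> - 1) * (\<delta> / 2)"
  have "\<rho> < 0"
    using \<alpha>_less \<delta>_pos by (simp add: \<rho>_def field_simps)
  then have "(\<lambda>T. C * C' * K powr (\<delta> / 2) * real T powr \<rho>) \<longlonglongrightarrow> 0"
    by (intro tendsto_mult_right_zero tendsto_neg_powr filterlim_real_sequentially)
  moreover have "eventually (\<lambda>T. C * C' * K powr (\<delta> / 2) * real T powr \<rho>
      = C * (C' * real T powr \<alpha>) * share_bound T powr (\<delta> / 2)) sequentially"
  proof (rule eventually_mono[OF eventually_gt_at_top[of 0]])
    fix T :: nat assume "0 < T"
    moreover have "0 < K" using C''_pos \<alpha>_less_1 by (simp add: K_def)
    ultimately show "C * C' * K powr (\<delta> / 2) * real T powr \<rho>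
        = C * (C' * real T powr \<alpha>) * share_bound T powr (\<delta> / 2)"
      by (simp add: share_bound_def K_def[symmetric] \<rho>_def powr_mult powr_powr powr_add
          algebra_simps)
  qed
  ultimately show ?thesis by (rule Lim_transform_eventually)
qed

lemma lyapunov_ratio_conv_0:
  "conv_prob M (\<lambda>T \<omega>. (\<Sum>t=1..T. h T t \<omega> powr (2 + \<delta>) * cond_abs_moment t \<omega>)
                        / total_variance T powr (1 + \<delta> / 2)) 0"
proof (rule conv_prob_if_eventually_dist_le[OF _ lyapunov_bound_tendsto_0])
  show "eventually (\<lambda>T. \<forall>\<omega>\<in>space M.
      \<bar>(\<Sum>t=1..T. h T t \<omega> powr (2 + \<delta>) * cond_abs_moment t \<omega>)
         / total_variance T powr (1 + \<delta> / 2) - 0\<bar>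
        \<le> C * (C' * real T powr \<alpha>) * share_bound T powr (\<delta> / 2)) sequentially"
    using eventually_ge_at_top[of 1]
  proof eventually_elim
    case (elim T)
    have "0 \<le> cond_abs_moment t \<omega>" for t \<omega>
      unfolding cond_abs_moment_def by simp
    then show ?case
      using lyapunov_sum_le[OF elim] total_variance_eq_1[OF elim]
      by (simp add: abs_of_nonneg sum_nonneg)
  qed
qed (use cond_abs_moment_measurable in measurable)

end

theorem theorem5:
  fixes M :: "'a measure" and Wsp :: "'w measure"
    and Y :: "nat \<Rightarrow> 'w \<Rightarrow> 'a \<Rightarrow> real" and W :: "nat \<Rightarrow> 'a \<Rightarrow> 'w"
    and P :: "nat \<Rightarrow> 'a \<Rightarrow> 'w measure"
    and \<psi> :: "('w \<Rightarrow> real) \<Rightarrow> real"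
    and \<gamma> :: "nat \<Rightarrow> 'a \<Rightarrow> 'w \<Rightarrow> real"
    and lam :: "nat \<Rightarrow> nat \<Rightarrow> 'a \<Rightarrow> real" and h :: "nat \<Rightarrow> nat \<Rightarrow> 'a \<Rightarrow> real"
    and \<delta> \<alpha> b C C' C'' :: real
  assumes prob: "prob_space M"
    and W_meas: "\<forall>t\<ge>1. W t \<in> measurable M Wsp"
    and Y_meas: "\<forall>t\<ge>1. \<forall>w\<in>space Wsp. Y t w \<in> borel_measurable M"
    and Yobs_meas: "\<forall>t\<ge>1. (\<lambda>\<omega>. Y t (W t \<omega>) \<omega>) \<in> borel_measurable M"
    and Y_indep: "prob_space.indep_vars M (\<lambda>_. Pi\<^sub>M (space Wsp) (\<lambda>_. borel :: real measure))
                    (\<lambda>t \<omega>. restrict (\<lambda>w. Y t w \<omega>) (space Wsp)) {1..}"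
    and Y_ident: "\<forall>t\<ge>1. distr M (Pi\<^sub>M (space Wsp) (\<lambda>_. borel :: real measure))
                             (\<lambda>\<omega>. restrict (\<lambda>w. Y t w \<omega>) (space Wsp))
                        = distr M (Pi\<^sub>M (space Wsp) (\<lambda>_. borel :: real measure))
                             (\<lambda>\<omega>. restrict (\<lambda>w. Y 1 w \<omega>) (space Wsp))"
    and Y_mom: "\<exists>vl vu K. 0 < vl \<and> (\<forall>t\<ge>1. \<forall>w\<in>space Wsp.
                  integrable M (\<lambda>\<omega>. (Y t w \<omega>)\<^sup>2) \<and>
                  vl \<le> (\<integral>\<omega>. (Y t w \<omega> - (\<integral>\<omega>'. Y t w \<omega>' \<partial>M))\<^sup>2 \<partial>M) \<and>
                  (\<integral>\<omega>. (Y t w \<omega> - (\<integral>\<omega>'. Y t w \<omega>' \<partial>M))\<^sup>2 \<partial>M) \<le> vu \<and>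
                  (\<integral>\<^sup>+\<omega>. ennreal (\<bar>Y t w \<omega>\<bar> powr (2 + \<delta>)) \<partial>M) \<le> ennreal K)"
    and P_kernel: "\<forall>t\<ge>1. P t \<in> measurable (hist M Wsp Y W (t - 1)) (prob_algebra Wsp)"
    and P_law: "\<forall>t\<ge>1. \<forall>A\<in>sets Wsp. \<forall>E\<in>sets (hist_fut M Wsp Y W t).
                  measure M ({\<omega>\<in>space M. W t \<omega> \<in> A} \<inter> E)
                  = (\<integral>\<omega>. indicator E \<omega> * measure (P t \<omega>) A \<partial>M)"
    and psi_linear: "\<forall>f g a c. \<psi> (\<lambda>w. a * f w + c * g w) = a * \<psi> f + c * \<psi> g"
    and psi_cont: "\<forall>t\<ge>1. \<forall>\<omega>\<in>space M. \<exists>c. \<forall>f\<in>L2k (P t \<omega>).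
                     \<bar>\<psi> f\<bar> \<le> c * sqrt (\<integral>w. (f w)\<^sup>2 \<partial>P t \<omega>)"
    and gamma_meas: "\<forall>t\<ge>1. (\<lambda>(\<omega>, w). \<gamma> t \<omega> w)
                       \<in> borel_measurable (hist M Wsp Y W (t - 1) \<Otimes>\<^sub>M Wsp)"
    and riesz: "\<forall>t\<ge>1. \<forall>\<omega>\<in>space M. \<gamma> t \<omega> \<in> L2k (P t \<omega>) \<and>
                  (\<forall>f\<in>L2k (P t \<omega>). (\<integral>w. \<gamma> t \<omega> w * f w \<partial>P t \<omega>) = \<psi> f)"
    and b_pos: "0 < b"
    and gamma_lower: "\<forall>t\<ge>1. \<forall>\<omega>\<in>space M. (\<integral>w. (\<gamma> t \<omega> w)\<^sup>2 \<partial>P t \<omega>) > b"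
    and delta_pos: "0 < \<delta>" and alpha_nonneg: "0 \<le> \<alpha>" and alpha_lt: "\<alpha> < \<delta> / (2 + \<delta>)"
    and C_pos: "0 < C" and C'_pos: "0 < C'" and C''_pos: "0 < C''"
    and gamma_ratio: "\<forall>t\<ge>1. \<forall>\<omega>\<in>space M.
                  integrable (P t \<omega>) (\<lambda>w. \<bar>\<gamma> t \<omega> w\<bar> powr (2 + \<delta>)) \<and>
                  (\<integral>w. \<bar>\<gamma> t \<omega> w\<bar> powr (2 + \<delta>) \<partial>P t \<omega>)
                    / (\<integral>w. (\<gamma> t \<omega> w)\<^sup>2 \<partial>P t \<omega>) powr (2 + \<delta>) \<le> C"
    and gamma_upper: "\<forall>t\<ge>1. \<forall>\<omega>\<in>space M.
                  (\<integral>w. (\<gamma> t \<omega> w)\<^sup>2 \<partial>P t \<omega>) \<le> C' * real t powr \<alpha>"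
    and lam_meas: "\<forall>T. \<forall>t\<in>{1..T}. lam T t \<in> borel_measurable (hist M Wsp Y W (t - 1))"
    and lam_lt1: "\<forall>T. \<forall>t\<in>{1..<T}. \<forall>\<omega>\<in>space M. lam T t \<omega> < 1"
    and lam_last: "\<forall>T\<ge>1. \<forall>\<omega>\<in>space M. lam T T \<omega> = 1"
    and lam_bounds: "\<forall>T. \<forall>t\<in>{1..T}. \<forall>\<omega>\<in>space M.
                  1 / (1 + real T - real t) \<le> lam T t \<omega> \<and>
                  lam T t \<omega> \<le> C'' * inverse (\<integral>w. (\<gamma> t \<omega> w)\<^sup>2 \<partial>P t \<omega>)
                     / (real t powr (- \<alpha>) + real T powr (1 - \<alpha>) - real t powr (1 - \<alpha>))"
    and h_rec: "\<forall>T. \<forall>t\<in>{1..T}. \<forall>\<omega>\<in>space M. 0 \<le> h T t \<omega> \<and>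
                  (h T t \<omega>)\<^sup>2 * (\<integral>w. (\<gamma> t \<omega> w)\<^sup>2 \<partial>P t \<omega>)
                  = (1 - (\<Sum>s\<in>{1..<t}. (h T s \<omega>)\<^sup>2 * (\<integral>w. (\<gamma> s \<omega> w)\<^sup>2 \<partial>P s \<omega>))) * lam T t \<omega>"
  shows "conv_prob_infty M (\<lambda>T \<omega>. (\<Sum>t=1..T. h T t \<omega>)\<^sup>2
            / (\<integral>\<omega>'. (\<Sum>t=1..T. (h T t \<omega>')\<^sup>2 * (\<gamma> t \<omega>' (W t \<omega>'))\<^sup>2) \<partial>M))
       \<and> (\<exists>p>1. conv_Lp M p (\<lambda>T \<omega>. (\<Sum>t=1..T. (h T t \<omega>)\<^sup>2 * (\<integral>w. (\<gamma> t \<omega> w)\<^sup>2 \<partial>P t \<omega>))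
            / (\<integral>\<omega>'. (\<Sum>t=1..T. (h T t \<omega>')\<^sup>2 * (\<gamma> t \<omega>' (W t \<omega>'))\<^sup>2) \<partial>M)) 1)
       \<and> conv_prob M (\<lambda>T \<omega>. (\<Sum>t=1..T. h T t \<omega> powr (2 + \<delta>)
                                  * (\<integral>w. \<bar>\<gamma> t \<omega> w\<bar> powr (2 + \<delta>) \<partial>P t \<omega>))
            / (\<integral>\<omega>'. (\<Sum>t=1..T. (h T t \<omega>')\<^sup>2 * (\<gamma> t \<omega>' (W t \<omega>'))\<^sup>2) \<partial>M) powr (1 + \<delta> / 2)) 0"
proof -
  have law: "1 \<le> t \<Longrightarrow> A \<in> sets Wsp \<Longrightarrow> E \<in> sets (hist M Wsp Y W (t - 1)) \<Longrightarrow>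
      measure M ({\<omega>\<in>space M. W t \<omega> \<in> A} \<inter> E) = (\<integral>\<omega>. indicator E \<omega> * measure (P t \<omega>) A \<partial>M)"
    for t A E using P_law sets_hist_subset_hist_fut by blast
  have lam_le_1: "lam T t \<omega> \<le> 1" if "t \<in> {1..T}" "\<omega> \<in> space M" for T t \<omega>
    using that lam_lt1 lam_last by (cases "t = T") (auto simp: less_imp_le)
  have \<gamma>_sq_pos: "0 < (\<integral>w. (\<gamma> t \<omega> w)\<^sup>2 \<partial>P t \<omega>)" if "1 \<le> t" "\<omega> \<in> space M" for t \<omega>
    using gamma_lower b_pos that by (meson order.strict_trans)
  interpret adaptive_allocation M Wsp Y W P \<gamma> lam h \<delta> \<alpha> C C' C''
    by (intro adaptive_allocation.intro[OF prob] adaptive_allocation_axioms.intro law lam_le_1 \<gamma>_sq_pos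
        P_kernel[rule_format] gamma_meas[rule_format] lam_meas[rule_format])
      (simp_all add: W_meas Yobs_meas riesz gamma_ratio gamma_upper lam_bounds h_rec delta_pos alpha_nonneg alpha_lt C_pos C'_pos C''_pos)
  show ?thesis
    using sum_h_squared_over_total_variance_tendsto_infinity conditional_variance_ratio_conv_L2
      lyapunov_ratio_conv_0
    unfolding total_variance_def share_def cond_sq_moment_def cond_abs_moment_def by force
qed

end
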